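(* Let $A,B$ be the Dickson matrices of $q$-polynomials $f,g\in\mathbb{F}_{q^n}[x]$ and suppose $A$ and $B$ are diagonally similar. Then there is $\lambda\in\mathbb{F}_{q^n}^*$ with $B=\mathrm{diag}(\lambda,\lambda^q,\dots,\lambda^{q^{n-1}})^{-1}A\,\mathrm{diag}(\lambda,\lambda^q,\dots,\lambda^{q^{n-1}})$, and then $g(x)=\lambda^{-1}f(\lambda x)$. Moreover, if $\mathbb{F}_{q'}$ ($\mathbb{F}_q\subseteq\mathbb{F}_{q'}\subseteq\mathbb{F}_{q^n}$) is the maximum field of linearity of $f$ (equivalently of $g$), then such a $\lambda$ is unique modulo $\mathbb{F}_{q'}^*$.
   Context: A $q$-polynomial is $f(x)=\sum_{j=0}^{n-1}a_jx^{q^j}\in\mathbb{F}_{q^n}[x]$; its Dickson matrix is the $n\times n$ matrix indexed by $\mathbb{Z}_n$ with $A[i|j]=a_{j-i}^{q^i}$. Two $n\times n$ matrices $A,B$ are diagonally similar if $B=D^{-1}AD$ for an invertible diagonal matrix $D$. The maximum field of linearity of $f$ is the largest subfield $\mathbb{F}_{q^e}$ ($e\mid n$) such that $f$ is $\mathbb{F}_{q^e}$-linear. *)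

theory Defs
  imports "HOL-Computational_Algebra.Polynomial" "HOL-Computational_Algebra.Primes" "HOL-Library.Cardinality"
begin

definition qpoly :: "nat \<Rightarrow> nat \<Rightarrow> (nat \<Rightarrow> 'a::comm_ring_1) \<Rightarrow> 'a poly" where
  "qpoly q n a = (\<Sum>j<n. monom (a j) (q ^ j))"

text \<open>Dickson matrix, indexed by Z_n (represented by 0..n-1):
  entry (i,j) is a_{(j-i) mod n} raised to q^i.\<close>
definition dickson :: "nat \<Rightarrow> nat \<Rightarrow> (nat \<Rightarrow> 'a::comm_ring_1) \<Rightarrow> nat \<Rightarrow> nat \<Rightarrow> 'a" where
  "dickson q n a i j = a ((j + n - i) mod n) ^ (q ^ i)"

definition diag_similar :: "nat \<Rightarrow> (nat \<Rightarrow> nat \<Rightarrow> 'a::field) \<Rightarrow> (nat \<Rightarrow> nat \<Rightarrow> 'a) \<Rightarrow> bool" where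
  "diag_similar n A B \<longleftrightarrow> (\<exists>d. (\<forall>i<n. d i \<noteq> 0) \<and>
      (\<forall>i<n. \<forall>j<n. B i j = inverse (d i) * A i j * d j))"

text \<open>The subfield F_{q^e} of the ambient field: fixed points of x to x^(q^e).\<close>
definition subfield_qe :: "nat \<Rightarrow> nat \<Rightarrow> 'a::field set" where
  "subfield_qe q e = {c. c ^ (q ^ e) = c}"

definition lin_over :: "nat \<Rightarrow> nat \<Rightarrow> 'a::field poly \<Rightarrow> bool" where
  "lin_over q e f \<longleftrightarrow> (\<forall>c \<in> subfield_qe q e. \<forall>x y.
      poly f (x + y) = poly f x + poly f y \<and> poly f (c * x) = c * poly f x)"

definition max_field_lin :: "nat \<Rightarrow> nat \<Rightarrow> nat \<Rightarrow> 'a::field poly \<Rightarrow> bool" where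
  "max_field_lin q n e f \<longleftrightarrow> e dvd n \<and> lin_over q e f \<and>
      (\<forall>e'. e' dvd n \<and> lin_over q e' f \<longrightarrow> e' \<le> e)"

end

theory Submission
  imports Defs
begin

text \<open>
  Write B = D^-1 A D with D = diag(d_0, ..., d_(n-1)) and set c_t = d_t / d_0 (indices mod n).
  Comparing row 0 with row i along the diagonal k shows that whenever a_k \<noteq> 0, c is a
  Frobenius cocycle at k: c_(i+k) = c_i * c_k^(q^i) for all i. The exponents with this
  property are closed under sums and differences, hence contain g = gcd(n, supp a). Iterating
  the relation shows that c_g has norm 1 from F_(q^n) to F_(q^g), so by Hilbert 90 (proved here
  by counting (q^g - 1)-th powers) c_g = \<lambda>^(q^g - 1), and then c_k = \<lambda>^(q^k - 1) on the support.

  A Dickson matrix is determined by its first row, so conjugation by diag(\<lambda>, \<lambda>^q, ...)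
  just means b_k = \<lambda>^-1 a_k \<lambda>^(q^k), i.e. the q-polynomial of b is \<lambda>^-1 f(\<lambda> x); and \<mu> works as well as \<lambda>
  iff \<mu>/\<lambda> is fixed by x \<mapsto> x^(q^k) for every k in the support, i.e. iff \<mu>/\<lambda> \<in> F_(q^g).
  Finally f is F_(q^e)-linear exactly when F_(q^e) \<subseteq> F_(q^g), so F_(q^g) is the maximum
  field of linearity of f; it depends only on the support, which a and b share.
\<close>

section \<open>Arithmetic of exponents\<close>

lemma power_diff_1_eq_nat:
  fixes Q :: nat
  assumes "Q > 0"
  shows "Q ^ t - 1 = (Q - 1) * (\<Sum>s<t. Q ^ s)"
proof -
  have "int (Q ^ t - 1) = int Q ^ t - 1"
    using assms by (simp add: of_nat_diff Suc_leI)
  also have "\<dots> = (int Q - 1) * (\<Sum>s<t. int Q ^ s)"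
    by (rule power_diff_1_eq)
  also have "\<dots> = int ((Q - 1) * (\<Sum>s<t. Q ^ s))"
    using assms by (simp add: of_nat_diff)
  finally show ?thesis
    by (simp only: of_nat_eq_iff)
qed

lemma gcd_mem_if_add_diff_closed:
  fixes K :: "nat set"
  assumes add: "\<And>x y. x \<in> K \<Longrightarrow> y \<in> K \<Longrightarrow> x + y \<in> K"
    and diff: "\<And>x y. x \<in> K \<Longrightarrow> y \<in> K \<Longrightarrow> y \<le> x \<Longrightarrow> x - y \<in> K"
  shows "m \<in> K \<Longrightarrow> n \<in> K \<Longrightarrow> gcd m n \<in> K"
proof (induction m n rule: gcd_nat_induct)
  case (step m n)
  have multiple: "t * n \<in> K" for t
    by (induction t) (use diff[OF step.prems(2) step.prems(2)] add[OF step.prems(2)] in auto)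
  have "m - (m div n) * n \<in> K"
    using diff[OF step.prems(1) multiple] by simp
  hence "m mod n \<in> K"
    by (simp add: minus_div_mult_eq_mod)
  thus ?case
    using step by (metis gcd_red_nat)
qed simp

lemma Gcd_insert_mem_if_add_diff_closed:
  fixes K :: "nat set"
  assumes add: "\<And>x y. x \<in> K \<Longrightarrow> y \<in> K \<Longrightarrow> x + y \<in> K"
    and diff: "\<And>x y. x \<in> K \<Longrightarrow> y \<in> K \<Longrightarrow> y \<le> x \<Longrightarrow> x - y \<in> K"
    and "finite A" and "A \<subseteq> K" and "n \<in> K"
  shows "Gcd (insert n A) \<in> K"
  using \<open>finite A\<close> \<open>A \<subseteq> K\<close>
proof (induction A rule: finite_induct)
  case (insert x A)
  have "Gcd (insert n (insert x A)) = gcd x (Gcd (insert n A))"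
    by (simp add: insert_commute gcd.left_commute)
  thus ?case
    using gcd_mem_if_add_diff_closed[OF add diff] insert by auto
qed (simp add: \<open>n \<in> K\<close>)

lemma power_q_power_fixed_dvd:
  fixes c :: "'a::monoid_mult"
  assumes "c ^ q ^ g = c" and "g dvd k"
  shows "c ^ q ^ k = c"
proof -
  have "c ^ q ^ (g * t) = c" for t
    by (induction t) (simp_all add: power_add power_mult assms(1))
  thus ?thesis
    using assms(2) by blast
qed

section \<open>Finite fields\<close>

lemma finite_field_power_card:
  fixes x :: "'a::{field,finite}"
  shows "x ^ CARD('a) = x"
proof (cases "x = 0")
  case False
  have "x * (\<Prod>y\<in>UNIV-{0}. x * y) = x * x ^ (CARD('a) - 1) * \<Prod>(UNIV-{0::'a})"
    by (simp add: prod.distrib mult_ac)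
  also have "x * x ^ (CARD('a) - 1) = x ^ CARD('a)"
    using finite_UNIV_card_ge_0[where ?'a = 'a] by (simp flip: power_Suc)
  also have "(\<Prod>y\<in>UNIV-{0}. x * y) = (\<Prod>y\<in>UNIV-{0}. y)"
    by (rule prod.reindex_bij_witness[of _ "\<lambda>y. y / x" "\<lambda>y. x * y"]) (use False in auto)
  finally show ?thesis
    by simp
qed (use finite_UNIV_card_ge_0[where ?'a = 'a] in auto)

lemma finite_field_power_card_minus_1:
  fixes x :: "'a::{field,finite}"
  assumes "x \<noteq> 0"
  shows "x ^ (CARD('a) - 1) = 1"
proof -
  have "x * x ^ (CARD('a) - 1) = x * 1"
    using finite_field_power_card[of x] finite_UNIV_card_ge_0[where ?'a = 'a]
    by (simp flip: power_Suc)
  thus ?thesis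
    using assms by simp
qed

lemma finite_field_power_card_power:
  fixes x :: "'a::{field,finite}"
  shows "x ^ CARD('a) ^ t = x"
  by (induction t) (simp_all add: power_mult finite_field_power_card)

lemma finite_field_power_q_power_mod:
  fixes x :: "'a::{field,finite}"
  assumes "CARD('a) = q ^ n"
  shows "x ^ q ^ i = x ^ q ^ (i mod n)"
proof -
  have "q ^ i = q ^ (i mod n) * CARD('a) ^ (i div n)"
    by (metis assms mod_div_mult_eq power_add power_mult mult.commute)
  thus ?thesis
    by (simp add: power_mult finite_field_power_card_power)
qed

lemma of_nat_CARD_eq_0: "of_nat CARD('a) = (0::'a::{ring_1,finite})"
proof -
  have "(\<Sum>y\<in>(UNIV::'a set). 1 + y) = (\<Sum>y\<in>UNIV. y)"
    by (rule sum.reindex_bij_witness[of _ "\<lambda>y. y - 1" "\<lambda>y. 1 + y"]) auto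
  hence "of_nat CARD('a) + (\<Sum>y\<in>(UNIV::'a set). y) = (\<Sum>y\<in>UNIV. y)"
    by (simp add: sum.distrib)
  thus ?thesis
    by simp
qed

lemma frobenius_power_add:
  fixes x y :: "'a::{field,finite}"
  assumes "CARD('a) = q ^ n" and "prime p" and "q = p ^ k"
  shows "(x + y) ^ q ^ j = x ^ q ^ j + y ^ q ^ j"
proof -
  have char_prime: "prime CHAR('a)"
    by (simp add: prime_CHAR_semidom finite_imp_CHAR_pos)
  have "CHAR('a) dvd CARD('a)"
    using of_nat_CARD_eq_0[where 'a = 'a] of_nat_eq_0_iff_char_dvd by blast
  hence "CHAR('a) dvd (p ^ k) ^ n"
    unfolding assms(1,3) .
  hence "CHAR('a) dvd p"
    using char_prime by (blast intro: prime_dvd_power)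
  hence "CHAR('a) = p"
    using char_prime assms(2) primes_dvd_imp_eq by blast
  hence "q ^ j = CHAR('a) ^ (k * j)"
    using assms by (simp add: power_mult)
  thus ?thesis
    using char_prime freshmans_dream' by blast
qed

lemma card_power_eq_le:
  fixes c :: "'a::idom"
  assumes "b > 0"
  shows "card {x. x ^ b = c} \<le> b"
proof -
  let ?p = "monom 1 b - [:c:]"
  have deg: "degree ?p = b"
    using assms unfolding diff_conv_add_uminus
    by (subst degree_add_eq_left) (auto simp: degree_monom_eq)
  have "?p \<noteq> 0"
    using deg assms by auto
  moreover have "{x. x ^ b = c} = {x. poly ?p x = 0}"
    by (auto simp: poly_monom)
  ultimately show ?thesis
    using card_poly_roots_bound[of ?p] deg by simp
qed

lemma card_image_power_ge:
  fixes a b :: nat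
  assumes "a * b = CARD('a::{field,finite}) - 1" and "a > 0"
  shows "b \<le> card ((\<lambda>x::'a. x ^ a) ` (UNIV - {0}))"
proof -
  let ?I = "(\<lambda>x::'a. x ^ a) ` (UNIV - {0})"
  have "a * b = card (UNIV - {0::'a})"
    using assms by (simp add: card_Diff_singleton)
  also have "\<dots> \<le> card (\<Union>y\<in>?I. {x::'a. x ^ a = y})"
    by (intro card_mono) auto
  also have "\<dots> \<le> (\<Sum>y\<in>?I. card {x::'a. x ^ a = y})"
    by (rule card_UN_le) auto
  also have "\<dots> \<le> (\<Sum>y\<in>?I. a)"
    by (intro sum_mono card_power_eq_le assms(2))
  finally show ?thesis
    using assms(2) by (simp add: mult.commute)
qed

lemma roots_of_unity_eq_image_power:
  fixes a b :: nat
  assumes "a * b = CARD('a::{field,finite}) - 1" and "a > 0" and "b > 0"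
  shows "{y::'a. y ^ b = 1} = (\<lambda>x. x ^ a) ` (UNIV - {0})"
proof (rule sym, rule card_subset_eq)
  show "(\<lambda>x::'a. x ^ a) ` (UNIV - {0}) \<subseteq> {y. y ^ b = 1}"
  proof
    fix y assume "y \<in> (\<lambda>x::'a. x ^ a) ` (UNIV - {0})"
    then obtain x where "x \<noteq> 0" "y = x ^ a" by blast
    thus "y \<in> {y. y ^ b = 1}"
      using finite_field_power_card_minus_1[of x] assms(1) by (simp flip: power_mult)
  qed
  show "card ((\<lambda>x::'a. x ^ a) ` (UNIV - {0})) = card {y::'a. y ^ b = 1}"
    using card_power_eq_le[OF assms(3), of "1::'a"] card_image_power_ge[OF assms(1,2)]
      card_mono[OF finite \<open>_ \<subseteq> {y. y ^ b = 1}\<close>] by linarith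
qed simp

lemma card_roots_of_unity:
  fixes a b :: nat
  assumes "a * b = CARD('a::{field,finite}) - 1" and "a > 0" and "b > 0"
  shows "card {y::'a. y ^ b = 1} = b"
  using card_power_eq_le[OF assms(3), of "1::'a"] card_image_power_ge[OF assms(1,2)]
    roots_of_unity_eq_image_power[OF assms] by (metis le_antisym)

lemma fixed_points_power_eq_insert_0_roots_of_unity:
  assumes "Q > 1"
  shows "{y::'a::field. y ^ Q = y} = insert 0 {y. y ^ (Q - 1) = 1}"
proof (rule set_eqI)
  fix y :: 'a
  have "y ^ Q = y * y ^ (Q - 1)"
    using assms by (simp flip: power_Suc)
  thus "y \<in> {y. y ^ Q = y} \<longleftrightarrow> y \<in> insert 0 {y. y ^ (Q - 1) = 1}"
    using assms by (cases "y = 0") (simp_all add: power_0_left)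
qed

lemma card_subfield_qe:
  assumes card: "CARD('a::{field,finite}) = q ^ n" and "q \<ge> 2" and "n > 0" and "e dvd n"
  shows "card (subfield_qe q e :: 'a set) = q ^ e"
proof -
  obtain m where n: "n = e * m"
    using assms(4) by blast
  have "e > 0"
    using assms(3,4) by (metis dvd_0_left_iff gr0I)
  hence "q \<le> q ^ e"
    using assms(2) by (intro self_le_power) auto
  hence qe: "q ^ e - 1 > 0"
    using assms(2) by linarith
  define M where "M = (\<Sum>s<m. (q ^ e) ^ s)"
  have "CARD('a) - 1 = (q ^ e - 1) * M"
    unfolding M_def card n power_mult using assms(2) by (intro power_diff_1_eq_nat) simp
  moreover have "q \<le> CARD('a)"
    unfolding card using assms(2,3) by (intro self_le_power) auto
  ultimately have "M > 0"
    using assms(2) by (cases M) auto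
  hence "card {y::'a. y ^ (q ^ e - 1) = 1} = q ^ e - 1"
    using qe \<open>CARD('a) - 1 = (q ^ e - 1) * M\<close> by (intro card_roots_of_unity[of M]) auto
  moreover have "0 \<notin> {y::'a. y ^ (q ^ e - 1) = 1}"
    using qe by (simp add: power_0_left)
  moreover have "subfield_qe q e = insert (0::'a) {y. y ^ (q ^ e - 1) = 1}"
    unfolding subfield_qe_def using qe by (intro fixed_points_power_eq_insert_0_roots_of_unity) simp
  ultimately show ?thesis
    using qe by simp
qed

lemma norm_eq_1_imp_power:
  fixes z :: "'a::{field,finite}"
  assumes card: "CARD('a) = q ^ n" and q2: "q \<ge> 2" and "n > 0" and n: "n = g * m"
    and "z ^ (\<Sum>s<m. (q ^ g) ^ s) = 1"
  shows "\<exists>l. l \<noteq> 0 \<and> z = l ^ (q ^ g - 1)"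
proof -
  define M where "M = (\<Sum>s<m. (q ^ g) ^ s)"
  have "g > 0"
    using n \<open>n > 0\<close> by (cases g) auto
  hence "q \<le> q ^ g"
    using q2 by (intro self_le_power) auto
  hence qg: "q ^ g - 1 > 0"
    using q2 by linarith
  have card_M: "CARD('a) - 1 = (q ^ g - 1) * M"
    unfolding M_def card n power_mult using q2 by (intro power_diff_1_eq_nat) simp
  moreover have "q \<le> CARD('a)"
    unfolding card using q2 \<open>n > 0\<close> by (intro self_le_power) auto
  ultimately have "M > 0"
    using q2 by (cases M) auto
  hence "{y::'a. y ^ M = 1} = (\<lambda>x. x ^ (q ^ g - 1)) ` (UNIV - {0})"
    using qg card_M by (intro roots_of_unity_eq_image_power) simp_all
  thus ?thesis
    using assms(5) unfolding M_def by blast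
qed

section \<open>q-polynomials and their maximum field of linearity\<close>

definition qsupport :: "nat \<Rightarrow> (nat \<Rightarrow> 'a::zero) \<Rightarrow> nat set" where
  "qsupport n a = {k. k < n \<and> a k \<noteq> 0}"

definition support_gcd :: "nat \<Rightarrow> (nat \<Rightarrow> 'a::zero) \<Rightarrow> nat" where
  "support_gcd n a = Gcd (insert n (qsupport n a))"

lemma finite_qsupport [simp]: "finite (qsupport n a)"
  by (simp add: qsupport_def)

lemma support_gcd_dvd: "support_gcd n a dvd n"
  by (simp add: support_gcd_def)

lemma support_gcd_dvd_qsupport: "k \<in> qsupport n a \<Longrightarrow> support_gcd n a dvd k"
  unfolding support_gcd_def by (rule Gcd_dvd) simp

lemma fixed_on_qsupport_iff_fixed_support_gcd:
  fixes v :: "'a::{field,finite}" and a :: "nat \<Rightarrow> 'b::zero"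
  assumes "CARD('a) = q ^ n"
  shows "(\<forall>k\<in>qsupport n a. v ^ q ^ k = v) \<longleftrightarrow> v ^ q ^ support_gcd n a = v"
proof
  assume fixed: "\<forall>k\<in>qsupport n a. v ^ q ^ k = v"
  let ?K = "{k. v ^ q ^ k = v}"
  have "x + y \<in> ?K" if "x \<in> ?K" "y \<in> ?K" for x y
    using that by (simp add: power_add power_mult)
  moreover have "x - y \<in> ?K" if "x \<in> ?K" "y \<in> ?K" "y \<le> x" for x y
  proof -
    have "v ^ q ^ x = (v ^ q ^ y) ^ q ^ (x - y)"
      using \<open>y \<le> x\<close> by (simp flip: power_mult power_add)
    thus ?thesis
      using that by simp
  qed
  moreover have "n \<in> ?K"
    using finite_field_power_card[of v] assms by simp
  ultimately have "Gcd (insert n (qsupport n a)) \<in> ?K"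
    using fixed by (intro Gcd_insert_mem_if_add_diff_closed) auto
  thus "v ^ q ^ support_gcd n a = v"
    by (simp add: support_gcd_def)
next
  assume "v ^ q ^ support_gcd n a = v"
  thus "\<forall>k\<in>qsupport n a. v ^ q ^ k = v"
    using power_q_power_fixed_dvd support_gcd_dvd_qsupport by metis
qed

lemma poly_qpoly: "poly (qpoly q n a) x = (\<Sum>j<n. a j * x ^ q ^ j)"
  by (simp add: qpoly_def poly_sum poly_monom)

lemma coeff_qpoly_q_power:
  assumes "q \<ge> 2" and "k < n"
  shows "coeff (qpoly q n a) (q ^ k) = a k"
proof -
  have "coeff (qpoly q n a) (q ^ k) = (\<Sum>j<n. if q ^ j = q ^ k then a j else 0)"
    by (simp add: qpoly_def coeff_sum coeff_monom)
  also have "\<dots> = (\<Sum>j<n. if j = k then a j else 0)"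
    using assms(1) by (intro sum.cong refl) (simp add: power_inject_exp)
  finally show ?thesis
    using assms(2) by simp
qed

lemma degree_qpoly_le:
  assumes "q > 0"
  shows "degree (qpoly q n a) \<le> q ^ (n - 1)"
proof -
  have "degree (monom (a j) (q ^ j)) \<le> q ^ (n - 1)" if "j < n" for j
    using assms that by (intro order.trans[OF degree_monom_le] power_increasing) auto
  thus ?thesis
    unfolding qpoly_def by (intro degree_sum_le) auto
qed

lemma qpoly_coeff_eq_0_if_poly_eq_0:
  fixes a :: "nat \<Rightarrow> 'a::{field,finite}"
  assumes "CARD('a) = q ^ n" and "q \<ge> 2"
    and "\<And>x. poly (qpoly q n a) x = 0" and "k < n"
  shows "a k = 0"
proof -
  have "q ^ (n - 1) < q ^ n"
    using assms(2,4) by (intro power_strict_increasing) auto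
  hence "degree (qpoly q n a) < card (UNIV :: 'a set)"
    using degree_qpoly_le[of q n a] assms(1,2) by (simp add: le_less_trans)
  hence "qpoly q n a = 0"
    by (intro poly_eqI_degree[of UNIV]) (simp_all add: assms(3))
  thus ?thesis
    using coeff_qpoly_q_power[OF assms(2,4), of a] by simp
qed

lemma pcompose_qpoly_scale:
  "pcompose (qpoly q n a) [:0, l:] = qpoly q n (\<lambda>j. a j * l ^ q ^ j)"
proof -
  have "pcompose (monom c m) [:0, l:] = monom (c * l ^ m) m" for c :: 'a and m
  proof -
    have "[:0, l:] = monom l 1"
      by (simp add: monom_Suc monom_0)
    thus ?thesis
      by (intro poly_eqI) (simp add: coeff_monom mult.commute)
  qed
  thus ?thesis
    by (simp add: qpoly_def pcompose_sum)
qed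

lemma smult_qpoly: "smult c (qpoly q n a) = qpoly q n (\<lambda>j. c * a j)"
  unfolding qpoly_def by (induction n) (simp_all add: smult_add_right smult_monom)

lemma lin_over_qpoly_iff:
  fixes a :: "nat \<Rightarrow> 'a::{field,finite}"
  assumes card: "CARD('a) = q ^ n" and "prime p" and "q = p ^ k" and q2: "q \<ge> 2"
  shows "lin_over q e (qpoly q n a) \<longleftrightarrow>
    subfield_qe q e \<subseteq> (subfield_qe q (support_gcd n a) :: 'a set)"
proof
  assume lin: "lin_over q e (qpoly q n a)"
  show "subfield_qe q e \<subseteq> (subfield_qe q (support_gcd n a) :: 'a set)"
  proof
    fix c :: 'a assume c: "c \<in> subfield_qe q e"
    have "poly (qpoly q n (\<lambda>j. a j * (c ^ q ^ j - c))) x = 0" for x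
    proof -
      have "poly (qpoly q n a) (c * x) = c * poly (qpoly q n a) x"
        using lin c unfolding lin_over_def by blast
      thus ?thesis
        by (simp add: poly_qpoly sum_distrib_left sum_subtractf power_mult_distrib algebra_simps)
    qed
    hence "\<forall>k\<in>qsupport n a. c ^ q ^ k = c"
      using qpoly_coeff_eq_0_if_poly_eq_0[OF card q2] by (fastforce simp: qsupport_def)
    thus "c \<in> subfield_qe q (support_gcd n a)"
      using fixed_on_qsupport_iff_fixed_support_gcd[OF card, where v = c and a = a] by (simp add: subfield_qe_def)
  qed
next
  assume sub: "subfield_qe q e \<subseteq> (subfield_qe q (support_gcd n a) :: 'a set)"
  show "lin_over q e (qpoly q n a)"
    unfolding lin_over_def
  proof (intro ballI allI conjI)
    fix c x y :: 'a
    show "poly (qpoly q n a) (x + y) = poly (qpoly q n a) x + poly (qpoly q n a) y"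
      by (simp add: poly_qpoly frobenius_power_add[OF assms(1-3)] distrib_left sum.distrib)
    assume "c \<in> subfield_qe q e"
    hence "\<forall>k\<in>qsupport n a. c ^ q ^ k = c"
      using sub fixed_on_qsupport_iff_fixed_support_gcd[OF card] by (auto simp: subfield_qe_def)
    hence "a j * (c * x) ^ q ^ j = c * (a j * x ^ q ^ j)" if "j \<in> {..<n}" for j
      using that by (cases "a j = 0") (auto simp: qsupport_def power_mult_distrib)
    thus "poly (qpoly q n a) (c * x) = c * poly (qpoly q n a) x"
      unfolding poly_qpoly sum_distrib_left by (rule sum.cong[OF refl])
  qed
qed

lemma max_field_lin_qpoly_iff:
  fixes a :: "nat \<Rightarrow> 'a::{field,finite}"
  assumes card: "CARD('a) = q ^ n" and "prime p" and "q = p ^ k" and q2: "q \<ge> 2" and "n > 0"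
  shows "max_field_lin q n e (qpoly q n a) \<longleftrightarrow> e = support_gcd n a"
proof -
  let ?g = "support_gcd n a"
  have lin: "lin_over q e' (qpoly q n a) \<longleftrightarrow> subfield_qe q e' \<subseteq> (subfield_qe q ?g :: 'a set)"
    for e'
    by (rule lin_over_qpoly_iff[OF assms(1-4)])
  have "e' \<le> ?g" if "e' dvd n" and "lin_over q e' (qpoly q n a)" for e'
  proof -
    have "q ^ e' = card (subfield_qe q e' :: 'a set)"
      using card_subfield_qe[OF card q2 \<open>n > 0\<close> that(1)] by simp
    also have "\<dots> \<le> card (subfield_qe q ?g :: 'a set)"
      using lin that(2) by (intro card_mono) auto
    also have "\<dots> = q ^ ?g"
      using card_subfield_qe[OF card q2 \<open>n > 0\<close> support_gcd_dvd] .
    finally show ?thesis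
      using q2 by (simp add: power_le_imp_le_exp)
  qed
  moreover have "?g dvd n" and "lin_over q ?g (qpoly q n a)"
    using lin support_gcd_dvd by auto
  ultimately show ?thesis
    unfolding max_field_lin_def using le_antisym by blast
qed

section \<open>Frobenius cocycles\<close>

definition frobenius_cocycle_at :: "nat \<Rightarrow> (nat \<Rightarrow> 'a::comm_monoid_mult) \<Rightarrow> nat \<Rightarrow> bool" where
  "frobenius_cocycle_at q c k \<longleftrightarrow> (\<forall>i. c (i + k) = c i * c k ^ q ^ i)"

lemma frobenius_cocycle_at_add:
  assumes "frobenius_cocycle_at q c k1" and "frobenius_cocycle_at q c k2"
  shows "frobenius_cocycle_at q c (k1 + k2)"
  unfolding frobenius_cocycle_at_def
proof
  fix i
  have "c (i + (k1 + k2)) = c i * c k1 ^ q ^ i * (c k2 ^ q ^ k1) ^ q ^ i"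
    using assms unfolding frobenius_cocycle_at_def
    by (simp flip: add.assoc add: power_add power_mult mult.commute[of "q ^ i"])
  also have "\<dots> = c i * c (k1 + k2) ^ q ^ i"
    using assms(2) unfolding frobenius_cocycle_at_def by (simp add: power_mult_distrib mult.assoc)
  finally show "c (i + (k1 + k2)) = c i * c (k1 + k2) ^ q ^ i" .
qed

lemma frobenius_cocycle_at_diff:
  fixes c :: "nat \<Rightarrow> 'a::field"
  assumes "\<And>t. c t \<noteq> 0" and "frobenius_cocycle_at q c k1" and "frobenius_cocycle_at q c k2"
    and "k2 \<le> k1"
  shows "frobenius_cocycle_at q c (k1 - k2)"
  unfolding frobenius_cocycle_at_def
proof
  fix i
  define r where "r = k1 - k2"
  have k1: "k1 = r + k2"
    using assms(4) by (simp add: r_def)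
  have "c (i + r + k2) = c (i + r) * c k2 ^ q ^ (i + r)"
    using assms(3) unfolding frobenius_cocycle_at_def by blast
  hence "c (i + r) * c k2 ^ q ^ (i + r) = c (i + k1)"
    unfolding k1 by (simp add: add.assoc)
  also have "\<dots> = c i * (c r * c k2 ^ q ^ r) ^ q ^ i"
    using assms(2,3) unfolding k1 frobenius_cocycle_at_def by simp
  also have "\<dots> = c i * c r ^ q ^ i * c k2 ^ q ^ (i + r)"
    by (simp add: power_mult_distrib power_add power_mult mult.commute[of "q ^ i"] mult.assoc)
  finally show "c (i + (k1 - k2)) = c i * c (k1 - k2) ^ q ^ i"
    using assms(1)[of k2] by (simp add: r_def)
qed

lemma frobenius_cocycle_at_mult:
  assumes "c 0 = 1" and "frobenius_cocycle_at q c g"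
  shows "c (t * g) = c g ^ (\<Sum>s<t. (q ^ g) ^ s)"
proof (induction t)
  case (Suc t)
  have "c (t * g + g) = c (t * g) * c g ^ q ^ (t * g)"
    using assms(2) unfolding frobenius_cocycle_at_def by blast
  hence "c (Suc t * g) = c (t * g) * c g ^ q ^ (t * g)"
    by (simp add: add.commute)
  also have "q ^ (t * g) = (q ^ g) ^ t"
    by (simp add: power_mult mult.commute)
  finally show ?case
    using Suc by (simp add: power_add)
qed (simp add: assms(1))

lemma frobenius_cocycle_at_Gcd:
  fixes c :: "nat \<Rightarrow> 'a::field"
  assumes "\<And>t. c t \<noteq> 0" and "finite S" and "\<And>k. k \<in> S \<Longrightarrow> frobenius_cocycle_at q c k"
    and "frobenius_cocycle_at q c n"
  shows "frobenius_cocycle_at q c (Gcd (insert n S))"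
proof -
  have "Gcd (insert n S) \<in> {k. frobenius_cocycle_at q c k}"
    using assms(2-4) by (intro Gcd_insert_mem_if_add_diff_closed)
      (auto intro: frobenius_cocycle_at_add frobenius_cocycle_at_diff[OF assms(1)])
  thus ?thesis
    by simp
qed

lemma frobenius_cocycle_at_coboundary:
  fixes c :: "nat \<Rightarrow> 'a::{field,finite}"
  assumes card: "CARD('a) = q ^ n" and q2: "q \<ge> 2" and "n > 0"
    and c0: "c 0 = 1" and cn: "c n = 1" and cocycle: "frobenius_cocycle_at q c g" and "g dvd n"
  shows "\<exists>l. l \<noteq> 0 \<and> (\<forall>t. c (t * g) = l ^ (q ^ (t * g) - 1))"
proof -
  obtain m where n: "n = g * m"
    using \<open>g dvd n\<close> by blast
  have "c g ^ (\<Sum>s<m. (q ^ g) ^ s) = 1"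
    using frobenius_cocycle_at_mult[OF c0 cocycle, of m] cn n by (simp add: mult.commute)
  then obtain l where "l \<noteq> 0" and cg: "c g = l ^ (q ^ g - 1)"
    using norm_eq_1_imp_power[OF card q2 \<open>n > 0\<close> n] by blast
  have "c (t * g) = l ^ (q ^ (t * g) - 1)" for t
  proof -
    have "c (t * g) = (l ^ (q ^ g - 1)) ^ (\<Sum>s<t. (q ^ g) ^ s)"
      using frobenius_cocycle_at_mult[OF c0 cocycle] cg by simp
    also have "\<dots> = l ^ ((q ^ g - 1) * (\<Sum>s<t. (q ^ g) ^ s))"
      by (rule power_mult[symmetric])
    also have "(q ^ g - 1) * (\<Sum>s<t. (q ^ g) ^ s) = q ^ (t * g) - 1"
      unfolding power_mult mult.commute[of t] using q2 by (intro power_diff_1_eq_nat[symmetric]) simp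
    finally show ?thesis .
  qed
  thus ?thesis
    using \<open>l \<noteq> 0\<close> by blast
qed

section \<open>Dickson matrices\<close>

definition dickson_conj_by :: "nat \<Rightarrow> nat \<Rightarrow> (nat \<Rightarrow> 'a::field) \<Rightarrow> (nat \<Rightarrow> 'a) \<Rightarrow> 'a \<Rightarrow> bool" where
  "dickson_conj_by q n a b l \<longleftrightarrow> l \<noteq> 0 \<and>
     (\<forall>i<n. \<forall>j<n. dickson q n b i j = inverse (l ^ (q ^ i)) * dickson q n a i j * l ^ (q ^ j))"

lemma add_diff_mod_mod_eq:
  assumes "i < n" and "j < (n::nat)"
  shows "(i + (j + n - i) mod n) mod n = j"
proof (cases "i \<le> j")
  case True
  hence "(j + n - i) mod n = j - i"
    using assms by (simp add: mod_if)
  thus ?thesis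
    using True assms by simp
next
  case False
  hence "(j + n - i) mod n = j + n - i"
    using assms by (simp add: mod_if)
  thus ?thesis
    using False assms by (simp add: mod_if)
qed

lemma add_mod_diff_mod_eq:
  assumes "i < n" and "k < (n::nat)"
  shows "((i + k) mod n + n - i) mod n = k"
proof (cases "i + k < n")
  case False
  hence "(i + k) mod n = i + k - n"
    using assms by (simp add: mod_if)
  thus ?thesis
    using False assms by simp
qed (use assms in simp)

lemma dickson_conj_by_iff_first_row:
  fixes a b :: "nat \<Rightarrow> 'a::{field,finite}"
  assumes card: "CARD('a) = q ^ n"
  shows "dickson_conj_by q n a b l \<longleftrightarrow> l \<noteq> 0 \<and> (\<forall>k<n. b k = inverse l * a k * l ^ q ^ k)"
proof
  assume "dickson_conj_by q n a b l"
  thus "l \<noteq> 0 \<and> (\<forall>k<n. b k = inverse l * a k * l ^ q ^ k)"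
    unfolding dickson_conj_by_def by (force simp: dickson_def)
next
  assume l: "l \<noteq> 0 \<and> (\<forall>k<n. b k = inverse l * a k * l ^ q ^ k)"
  have "dickson q n b i j = inverse (l ^ q ^ i) * dickson q n a i j * l ^ q ^ j"
    if "i < n" and "j < n" for i j
  proof -
    define k where "k = (j + n - i) mod n"
    have "k < n"
      using that by (simp add: k_def)
    have "(l ^ q ^ k) ^ q ^ i = l ^ q ^ (i + k)"
      by (metis power_add power_mult mult.commute)
    also have "\<dots> = l ^ q ^ j"
      using finite_field_power_q_power_mod[OF card, of l "i + k"] add_diff_mod_mod_eq[OF that]
      by (simp add: k_def)
    finally have "l ^ q ^ j = (l ^ q ^ k) ^ q ^ i" ..
    thus ?thesis
      using l \<open>k < n\<close> by (simp add: dickson_def k_def power_mult_distrib power_inverse)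
  qed
  thus "dickson_conj_by q n a b l"
    using l by (simp add: dickson_conj_by_def)
qed

lemma qpoly_eq_if_dickson_conj_by:
  fixes a b :: "nat \<Rightarrow> 'a::{field,finite}"
  assumes "CARD('a) = q ^ n" and "dickson_conj_by q n a b l"
  shows "qpoly q n b = smult (inverse l) (pcompose (qpoly q n a) [:0, l:])"
  using assms unfolding dickson_conj_by_iff_first_row[OF assms(1)] pcompose_qpoly_scale smult_qpoly
  by (auto simp: qpoly_def mult.assoc intro: sum.cong)

lemma qsupport_eq_if_dickson_conj_by:
  fixes a b :: "nat \<Rightarrow> 'a::{field,finite}"
  assumes "CARD('a) = q ^ n" and "dickson_conj_by q n a b l"
  shows "qsupport n b = qsupport n a"
  using assms unfolding dickson_conj_by_iff_first_row[OF assms(1)] by (auto simp: qsupport_def)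

lemma dickson_conj_by_iff_quotient_fixed:
  fixes a b :: "nat \<Rightarrow> 'a::{field,finite}"
  assumes card: "CARD('a) = q ^ n" and "dickson_conj_by q n a b l"
  shows "dickson_conj_by q n a b m \<longleftrightarrow>
    m \<noteq> 0 \<and> (\<forall>k\<in>qsupport n a. (m / l) ^ q ^ k = m / l)"
proof -
  have l: "l \<noteq> 0" and b: "\<And>k. k < n \<Longrightarrow> b k = inverse l * a k * l ^ q ^ k"
    using assms unfolding dickson_conj_by_iff_first_row[OF card] by auto
  have "inverse l * x * l ^ N = inverse m * x * m ^ N \<longleftrightarrow> x = 0 \<or> (m / l) ^ N = m / l"
    if "m \<noteq> 0" for x :: 'a and N
    using l that by (auto simp: power_divide field_simps)
  thus ?thesis
    unfolding dickson_conj_by_iff_first_row[OF card] qsupport_def using b by auto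
qed

lemma diag_similar_dickson_first_row:
  fixes a b d :: "nat \<Rightarrow> 'a::field"
  assumes "\<forall>i<n. \<forall>j<n. dickson q n b i j = inverse (d i) * dickson q n a i j * d j" and "k < n"
  shows "b k = inverse (d 0) * a k * d k"
  using assms by (force simp: dickson_def)

lemma diag_similar_dickson_entry:
  fixes a b d :: "nat \<Rightarrow> 'a::field"
  assumes sim: "\<forall>i<n. \<forall>j<n. dickson q n b i j = inverse (d i) * dickson q n a i j * d j"
    and d_nz: "\<forall>i<n. d i \<noteq> 0" and "i < n" and "k < n" and "a k \<noteq> 0"
  shows "d ((i + k) mod n) / d i = (d k / d 0) ^ q ^ i"
proof -
  define j where "j = (i + k) mod n"
  have "j < n"
    using \<open>i < n\<close> by (simp add: j_def)
  have "b k = inverse (d 0) * a k * d k"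
    using diag_similar_dickson_first_row[OF sim \<open>k < n\<close>] .
  moreover have "b k ^ q ^ i = inverse (d i) * a k ^ q ^ i * d j"
  proof -
    have "(j + n - i) mod n = k"
      using add_mod_diff_mod_eq[OF \<open>i < n\<close> \<open>k < n\<close>] by (simp add: j_def)
    moreover have "dickson q n b i j = inverse (d i) * dickson q n a i j * d j"
      using sim \<open>i < n\<close> \<open>j < n\<close> by blast
    ultimately show ?thesis
      by (simp add: dickson_def)
  qed
  ultimately have "a k ^ q ^ i * (d k / d 0) ^ q ^ i = a k ^ q ^ i * (d j / d i)"
    by (simp add: power_mult_distrib power_divide field_simps)
  moreover have "a k ^ q ^ i \<noteq> 0"
    using \<open>a k \<noteq> 0\<close> by simp
  ultimately have "(d k / d 0) ^ q ^ i = d j / d i"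
    by (metis mult_left_cancel)
  thus ?thesis
    unfolding j_def by (rule sym)
qed

lemma diag_similar_dickson_cocycle:
  fixes a b d :: "nat \<Rightarrow> 'a::{field,finite}"
  assumes card: "CARD('a) = q ^ n"
    and sim: "\<forall>i<n. \<forall>j<n. dickson q n b i j = inverse (d i) * dickson q n a i j * d j"
    and d_nz: "\<forall>i<n. d i \<noteq> 0" and "k \<in> qsupport n a"
  shows "frobenius_cocycle_at q (\<lambda>t. d (t mod n) / d 0) k"
  unfolding frobenius_cocycle_at_def
proof
  fix i
  let ?c = "\<lambda>t. d (t mod n) / d 0"
  have k: "k < n" "a k \<noteq> 0" and "n > 0"
    using \<open>k \<in> qsupport n a\<close> by (auto simp: qsupport_def)
  have "?c (i + k) = ?c (i mod n + k)"
    by (simp add: mod_add_left_eq)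
  also have "\<dots> = ?c (i mod n) * ?c k ^ q ^ (i mod n)"
    using diag_similar_dickson_entry[OF sim d_nz, of "i mod n" k] k \<open>n > 0\<close> d_nz
    by (auto simp: field_simps)
  also have "\<dots> = ?c i * ?c k ^ q ^ i"
    using finite_field_power_q_power_mod[OF card, of "?c k" i] by simp
  finally show "?c (i + k) = ?c i * ?c k ^ q ^ i" .
qed

lemma diag_similar_dickson_imp_dickson_conj_by:
  fixes a b :: "nat \<Rightarrow> 'a::{field,finite}"
  assumes card: "CARD('a) = q ^ n" and q2: "q \<ge> 2" and "n > 0"
    and "diag_similar n (dickson q n a) (dickson q n b)"
  shows "\<exists>l. dickson_conj_by q n a b l"
proof -
  obtain d where d_nz: "\<forall>i<n. d i \<noteq> (0::'a)"
    and sim: "\<forall>i<n. \<forall>j<n. dickson q n b i j = inverse (d i) * dickson q n a i j * d j"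
    using assms(4) unfolding diag_similar_def by blast
  define c where "c = (\<lambda>t. d (t mod n) / d 0)"
  define g where "g = support_gcd n a"
  have d0: "d 0 \<noteq> 0"
    using d_nz \<open>n > 0\<close> by simp
  have "frobenius_cocycle_at q c k" if "k \<in> qsupport n a" for k
    unfolding c_def using diag_similar_dickson_cocycle[OF card sim d_nz that] .
  moreover have "frobenius_cocycle_at q c n"
    by (simp add: frobenius_cocycle_at_def c_def)
  ultimately have "frobenius_cocycle_at q c g"
    unfolding g_def support_gcd_def using d_nz d0 \<open>n > 0\<close>
    by (intro frobenius_cocycle_at_Gcd) (auto simp: c_def)
  then obtain l where "l \<noteq> 0" and cl: "\<And>t. c (t * g) = l ^ (q ^ (t * g) - 1)"
    using frobenius_cocycle_at_coboundary[OF card q2 \<open>n > 0\<close>, of c g] d0 support_gcd_dvd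
    by (auto simp: c_def g_def)
  have "b k = inverse l * a k * l ^ q ^ k" if "k < n" for k
  proof (cases "a k = 0")
    case False
    have "g dvd k"
      using support_gcd_dvd_qsupport[of k n a] that False by (simp add: qsupport_def g_def)
    then obtain t where "k = t * g"
      by (metis dvdE mult.commute)
    hence "c k = l ^ (q ^ k - 1)"
      using cl by simp
    moreover have "b k = a k * c k"
      using diag_similar_dickson_first_row[OF sim that] that by (simp add: c_def field_simps)
    moreover have "l ^ q ^ k = l * l ^ (q ^ k - 1)"
      using q2 by (simp flip: power_Suc)
    ultimately show ?thesis
      using \<open>l \<noteq> 0\<close> by simp
  qed (simp add: diag_similar_dickson_first_row[OF sim that])
  thus ?thesis
    using \<open>l \<noteq> 0\<close> dickson_conj_by_iff_first_row[OF card] by blast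
qed

theorem mainTheorem9:
  fixes a b :: "nat \<Rightarrow> 'a::{field,finite}" and q n :: nat
  assumes q_pp: "\<exists>p k. prime p \<and> k > 0 \<and> q = p ^ k"
    and n_pos: "n \<ge> 1"
    and card: "CARD('a) = q ^ n"
    and sim: "diag_similar n (dickson q n a) (dickson q n b)"
  shows "(\<exists>l::'a. l \<noteq> 0 \<and>
            (\<forall>i<n. \<forall>j<n. dickson q n b i j
               = inverse (l ^ (q ^ i)) * dickson q n a i j * l ^ (q ^ j)))
      \<and> (\<forall>l::'a. l \<noteq> 0 \<and>
            (\<forall>i<n. \<forall>j<n. dickson q n b i j
               = inverse (l ^ (q ^ i)) * dickson q n a i j * l ^ (q ^ j))
           \<longrightarrow> qpoly q n b = smult (inverse l) (pcompose (qpoly q n a) [:0, l:]))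
      \<and> (\<forall>e. max_field_lin q n e (qpoly q n a) \<longrightarrow>
            max_field_lin q n e (qpoly q n b) \<and>
            (\<forall>l m::'a. l \<noteq> 0 \<and>
               (\<forall>i<n. \<forall>j<n. dickson q n b i j
                  = inverse (l ^ (q ^ i)) * dickson q n a i j * l ^ (q ^ j))
              \<longrightarrow> (m \<noteq> 0 \<and>
                    (\<forall>i<n. \<forall>j<n. dickson q n b i j
                       = inverse (m ^ (q ^ i)) * dickson q n a i j * m ^ (q ^ j)))
                  \<longleftrightarrow> (m \<noteq> 0 \<and> m / l \<in> subfield_qe q e)))"
proof -
  obtain p k where p: "prime p" "k > 0" "q = p ^ k"
    using q_pp by blast
  hence q2: "q \<ge> 2"
    using prime_ge_2_nat[of p] self_le_power[of p k] by simp
  have "n > 0"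
    using n_pos by simp
  have max_iff: "max_field_lin q n e (qpoly q n f) \<longleftrightarrow> e = support_gcd n f"
    for e and f :: "nat \<Rightarrow> 'a"
    using max_field_lin_qpoly_iff[OF card p(1,3) q2 \<open>n > 0\<close>] .
  obtain l0 where l0: "dickson_conj_by q n a b l0"
    using diag_similar_dickson_imp_dickson_conj_by[OF card q2 \<open>n > 0\<close> sim] by blast
  show ?thesis
    unfolding dickson_conj_by_def[symmetric]
  proof (intro conjI allI impI)
    show "\<exists>l. dickson_conj_by q n a b l"
      using l0 ..
  next
    fix l assume "dickson_conj_by q n a b l"
    thus "qpoly q n b = smult (inverse l) (pcompose (qpoly q n a) [:0, l:])"
      by (rule qpoly_eq_if_dickson_conj_by[OF card])
  next
    fix e assume "max_field_lin q n e (qpoly q n a)"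
    thus "max_field_lin q n e (qpoly q n b)"
      using max_iff qsupport_eq_if_dickson_conj_by[OF card l0] by (simp add: support_gcd_def)
  next
    fix e l m assume "max_field_lin q n e (qpoly q n a)" and "dickson_conj_by q n a b l"
    thus "dickson_conj_by q n a b m \<longleftrightarrow> m \<noteq> 0 \<and> m / l \<in> subfield_qe q e"
      using max_iff dickson_conj_by_iff_quotient_fixed[OF card, where m = m]
        fixed_on_qsupport_iff_fixed_support_gcd[OF card, where v = "m / l" and a = a]
      by (simp add: subfield_qe_def)
  qed
qed

end
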